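(* Let $f:\Omega\to[0,M]$ be weakly canalizing with respect to coordinate $j$ and $(a,b)\in\Omega_j\times\mathbb{R}$, where $k_j\ge2$. Let $f'=f\restriction_{x_j\ne a}$, defined on $\Omega'=\Omega_1\times\cdots\times(\Omega_j\setminus\{a\})\times\cdots\times\Omega_n$. Then $$\operatorname{AS}[f]\le \frac{M^2}{4}+\frac{k_j-1}{k_j}\,\operatorname{AS}[f'],$$ where $\operatorname{AS}[f']$ is computed on the product $\Omega'$ with its own uniform product measure.
   Context: Let $\Omega_1,\ldots,\Omega_n$ be finite sets with $|\Omega_i|=k_i\ge1$, and $\Omega=\prod_i\Omega_i$ with the uniform product probability measure. Weakly canalizing: $f$ is weakly canalizing with respect to $j$ and $(a,b)$ if $f(x)=b$ for all $x\in\Omega$ with $x_j=a$. Influence and average sensitivity: for a product $\Pi=\prod_i P_i$ of finite nonempty sets with the uniform product measure and $g:\Pi\to\mathbb{R}$, let $\operatorname{Var}_i[g](x)$ be the variance of $y_i\mapsto g(x_1,\ldots,x_{i-1},y_i,x_{i+1},\ldots,x_n)$ for $y_i$ uniform on $P_i$. Then: - $\operatorname{Inf}_i[g]=\mathbf{E}_x[\operatorname{Var}_i[g](x)]$; - $\operatorname{AS}[g]=\sum_{i=1}^n\operatorname{Inf}_i[g]$. *)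

theory Defs
  imports "HOL-Library.FuncSet" Complex_Main
begin

definition prodsp :: "nat \<Rightarrow> (nat \<Rightarrow> 'a set) \<Rightarrow> (nat \<Rightarrow> 'a) set" where
  "prodsp n P = PiE {..<n} P"

definition avg :: "'b set \<Rightarrow> ('b \<Rightarrow> real) \<Rightarrow> real" where
  "avg S h = (\<Sum>s\<in>S. h s) / real (card S)"

definition coord_var :: "(nat \<Rightarrow> 'a set) \<Rightarrow> ((nat \<Rightarrow> 'a) \<Rightarrow> real) \<Rightarrow> nat \<Rightarrow> (nat \<Rightarrow> 'a) \<Rightarrow> real" where
  "coord_var P g i x =
     avg (P i) (\<lambda>y. (g (x(i := y)) - avg (P i) (\<lambda>z. g (x(i := z)))) ^ 2)"

definition influence :: "nat \<Rightarrow> (nat \<Rightarrow> 'a set) \<Rightarrow> ((nat \<Rightarrow> 'a) \<Rightarrow> real) \<Rightarrow> nat \<Rightarrow> real" where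
  "influence n P g i = avg (prodsp n P) (\<lambda>x. coord_var P g i x)"

definition avg_sens :: "nat \<Rightarrow> (nat \<Rightarrow> 'a set) \<Rightarrow> ((nat \<Rightarrow> 'a) \<Rightarrow> real) \<Rightarrow> real" where
  "avg_sens n P g = (\<Sum>i<n. influence n P g i)"

definition weakly_canalizing ::
  "nat \<Rightarrow> (nat \<Rightarrow> 'a set) \<Rightarrow> ((nat \<Rightarrow> 'a) \<Rightarrow> real) \<Rightarrow> nat \<Rightarrow> 'a \<Rightarrow> real \<Rightarrow> bool" where
  "weakly_canalizing n P f j a b = (\<forall>x\<in>prodsp n P. x j = a \<longrightarrow> f x = b)"

end

theory Submission
  imports Defs
begin

text \<open>Split AS[f] into the influence of coordinate j and the rest. The j-th influence is an
  average of variances of [0,M]-valued functions, hence at most M^2/4 (Popoviciu). For i \<noteq> j,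
  the coordinate-i variance vanishes on the slice x_j = a, where f is constantly b; the
  remaining points form the product \<Omega>', which has a fraction (k_j - 1)/k_j of the points
  of \<Omega>, so Inf_i[f] = (k_j - 1)/k_j Inf_i[f'].\<close>

lemma avg_nonneg: "(\<And>s. s \<in> S \<Longrightarrow> 0 \<le> h s) \<Longrightarrow> 0 \<le> avg S h"
  unfolding avg_def by (intro divide_nonneg_nonneg sum_nonneg) auto

lemma avg_le_const:
  assumes "finite S" "S \<noteq> {}" "\<And>s. s \<in> S \<Longrightarrow> h s \<le> c"
  shows "avg S h \<le> c"
proof -
  have "(\<Sum>s\<in>S. h s) \<le> (\<Sum>s\<in>S. c)" using assms(3) by (rule sum_mono)
  moreover have "card S > 0" using assms by auto
  ultimately show ?thesis unfolding avg_def by (simp add: divide_le_eq mult.commute)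
qed

lemma avg_const: "finite S \<Longrightarrow> S \<noteq> {} \<Longrightarrow> avg S (\<lambda>_. c) = c"
  unfolding avg_def by simp

lemma avg_variance_le:
  assumes fin: "finite S" and ne: "S \<noteq> {}" and bd: "\<And>s. s \<in> S \<Longrightarrow> 0 \<le> h s \<and> h s \<le> M"
  shows "avg S (\<lambda>y. (h y - avg S h)^2) \<le> M^2/4"
proof -
  define m where "m = avg S h"
  define c where "c = real (card S)"
  have c: "c > 0" using fin ne c_def by auto
  have sh: "(\<Sum>s\<in>S. h s) = c * m" using c unfolding m_def avg_def c_def by simp
  have "(\<Sum>y\<in>S. (h y - m)^2) = (\<Sum>y\<in>S. h y ^2) - 2*m*(\<Sum>y\<in>S. h y) + c * m^2"
    by (simp add: power2_diff sum.distrib sum_subtractf sum_distrib_left sum_distrib_right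
        c_def algebra_simps)
  also have "\<dots> = (\<Sum>y\<in>S. h y ^2) - c*m^2" using sh by (simp add: power2_eq_square)
  also have "\<dots> \<le> (\<Sum>y\<in>S. M * h y) - c*m^2"
    \<comment> \<open>h^2 \<le> M h on [0,M]\<close>
    using sum_mono[of S "\<lambda>y. h y ^ 2" "\<lambda>y. M * h y"] bd
    by (auto simp: power2_eq_square intro: mult_right_mono)
  also have "\<dots> = c * (M*m - m^2)" using sh by (simp add: sum_distrib_left[symmetric] algebra_simps)
  also have "\<dots> \<le> c * (M^2/4)"
  proof -
    have "M*m - m^2 \<le> M^2/4" using sum_squares_ge_zero[of "M/2 - m" 0]
      by (simp add: power2_eq_square algebra_simps)
    thus ?thesis using c by simp
  qed
  finally have "(\<Sum>y\<in>S. (h y - m)^2) \<le> c * (M^2/4)" .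
  moreover have "avg S (\<lambda>y. (h y - m)^2) = (\<Sum>y\<in>S. (h y - m)^2) / c"
    by (simp add: avg_def c_def)
  ultimately show ?thesis using c unfolding m_def[symmetric]
    by (simp add: divide_le_eq mult.commute)
qed

lemma prodsp_fun_upd: "x \<in> prodsp n P \<Longrightarrow> i < n \<Longrightarrow> y \<in> P i \<Longrightarrow> x(i := y) \<in> prodsp n P"
  unfolding prodsp_def using PiE_fun_upd[of y P i x "{..<n}"] by (simp add: insert_absorb)

lemma finite_prodsp: "(\<And>i. i < n \<Longrightarrow> finite (P i)) \<Longrightarrow> finite (prodsp n P)"
  unfolding prodsp_def by (auto intro: finite_PiE)

lemma prodsp_nonempty: "(\<And>i. i < n \<Longrightarrow> P i \<noteq> {}) \<Longrightarrow> prodsp n P \<noteq> {}"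
  unfolding prodsp_def by (auto simp: PiE_eq_empty_iff)

lemma card_prodsp_remove_ratio:
  assumes fin: "\<And>i. i < n \<Longrightarrow> finite (P i)" and ne: "\<And>i. i < n \<Longrightarrow> P i \<noteq> {}"
    and j: "j < n" and a: "a \<in> P j"
  shows "real (card (prodsp n (P(j := P j - {a})))) / real (card (prodsp n P))
           = (real (card (P j)) - 1) / real (card (P j))"
proof -
  define R where "R = (\<Prod>l\<in>{..<n}-{j}. card (P l))"
  have R_pos: "R > 0"
    unfolding R_def using fin ne by (auto intro!: prod_pos simp: card_gt_0_iff)
  have k_pos: "card (P j) > 0" using fin[OF j] a by (auto simp: card_gt_0_iff)
  have "card (prodsp n P) = card (P j) * R"
    unfolding prodsp_def R_def using j by (simp add: card_PiE prod.remove)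
  moreover have "(\<Prod>l\<in>{..<n}-{j}. card ((P(j := P j - {a})) l)) = R"
    unfolding R_def by (intro prod.cong) auto
  then have "card (prodsp n (P(j := P j - {a}))) = (card (P j) - 1) * R"
    unfolding prodsp_def using j a fin[OF j] by (simp add: card_PiE prod.remove)
  ultimately show ?thesis using R_pos k_pos by (simp add: of_nat_diff)
qed

lemma coord_var_nonneg: "0 \<le> coord_var P g i x"
  unfolding coord_var_def by (rule avg_nonneg) simp

lemma coord_var_cong: "P i = Q i \<Longrightarrow> coord_var P g i x = coord_var Q g i x"
  unfolding coord_var_def by simp

lemma coord_var_const:
  assumes "finite (P i)" "P i \<noteq> {}" "\<And>y. y \<in> P i \<Longrightarrow> g (x(i := y)) = b"
  shows "coord_var P g i x = 0"
proof -
  have "coord_var P g i x = avg (P i) (\<lambda>y. (b - avg (P i) (\<lambda>z. b))^2)"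
    using assms(3) unfolding coord_var_def avg_def by (simp cong: sum.cong)
  thus ?thesis using assms(1,2) by (simp add: avg_const)
qed

lemma influence_nonneg: "0 \<le> influence n P g i"
  unfolding influence_def by (intro avg_nonneg coord_var_nonneg)

lemma influence_le:
  assumes fin: "\<And>i. i < n \<Longrightarrow> finite (P i)" and ne: "\<And>i. i < n \<Longrightarrow> P i \<noteq> {}"
    and range: "\<And>x. x \<in> prodsp n P \<Longrightarrow> 0 \<le> g x \<and> g x \<le> M" and i: "i < n"
  shows "influence n P g i \<le> M^2/4"
  unfolding influence_def
proof (rule avg_le_const[OF finite_prodsp[OF fin] prodsp_nonempty[OF ne]])
  fix x assume x: "x \<in> prodsp n P"
  show "coord_var P g i x \<le> M^2/4" unfolding coord_var_def
  proof (rule avg_variance_le[OF fin[OF i] ne[OF i]])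
    fix y assume "y \<in> P i"
    then show "0 \<le> g (x(i := y)) \<and> g (x(i := y)) \<le> M"
      by (intro range prodsp_fun_upd[OF x i])
  qed
qed

lemma influence_restrict_canalizing:
  assumes fin: "\<And>i. i < n \<Longrightarrow> finite (P i)" and ne: "\<And>i. i < n \<Longrightarrow> P i \<noteq> {}"
    and j: "j < n" and a: "a \<in> P j" and kj: "card (P j) \<ge> 2"
    and canal: "weakly_canalizing n P g j a b"
    and i: "i < n" "i \<noteq> j"
  shows "influence n P g i
           = (real (card (P j)) - 1) / real (card (P j)) * influence n (P(j := P j - {a})) g i"
proof -
  define P' where "P' = P(j := P j - {a})"
  define S where "S = (\<Sum>x\<in>prodsp n P. coord_var P g i x)"
  have slice: "prodsp n P' = {x \<in> prodsp n P. x j \<noteq> a}"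
    unfolding prodsp_def P'_def using j by (auto simp: PiE_def Pi_def split: if_splits)
  have "coord_var P g i x = 0" if x: "x \<in> prodsp n P" "x j = a" for x
  proof (rule coord_var_const[where P = P and i = i and b = b, OF fin[OF i(1)] ne[OF i(1)]])
    fix y assume "y \<in> P i"
    then show "g (x(i := y)) = b"
      using canal prodsp_fun_upd[OF x(1) i(1)] x(2) i(2) by (simp add: weakly_canalizing_def)
  qed
  hence "S = (\<Sum>x\<in>{x \<in> prodsp n P. x j \<noteq> a}. coord_var P g i x)"
    unfolding S_def using finite_prodsp[OF fin] by (intro sum.mono_neutral_right) auto
  also have "\<dots> = (\<Sum>x\<in>prodsp n P'. coord_var P' g i x)"
    unfolding slice using i by (intro sum.cong refl coord_var_cong) (simp add: P'_def)
  finally have S': "S = (\<Sum>x\<in>prodsp n P'. coord_var P' g i x)" .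
  have "\<not> P j \<subseteq> {a}" using kj card_mono[of "{a}" "P j"] by auto
  then have "P' j \<noteq> {}" by (auto simp: P'_def)
  then have card_pos: "card (prodsp n P') > 0"
    using fin ne by (auto simp: P'_def card_gt_0_iff split: if_splits
        intro!: finite_prodsp prodsp_nonempty)
  have "(real (card (P j)) - 1) / real (card (P j)) * influence n P' g i
      = real (card (prodsp n P')) / real (card (prodsp n P)) * (S / real (card (prodsp n P')))"
    unfolding influence_def avg_def S' P'_def
    by (simp only: card_prodsp_remove_ratio[where P = P, OF fin ne j a])
  also have "\<dots> = influence n P g i"
    using card_pos unfolding influence_def avg_def S_def by simp
  finally show ?thesis unfolding P'_def ..
qed

theorem mainTheorem4:
  fixes n :: nat and Om :: "nat \<Rightarrow> 'a set" and f :: "(nat \<Rightarrow> 'a) \<Rightarrow> real"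
    and M :: real and j :: nat and a :: 'a and b :: real
  assumes fin: "\<And>i. i < n \<Longrightarrow> finite (Om i)"
    and ne: "\<And>i. i < n \<Longrightarrow> Om i \<noteq> {}"
    and range: "\<And>x. x \<in> prodsp n Om \<Longrightarrow> 0 \<le> f x \<and> f x \<le> M"
    and j: "j < n" and a: "a \<in> Om j"
    and kj: "card (Om j) \<ge> 2"
    and canal: "weakly_canalizing n Om f j a b"
  shows "avg_sens n Om f \<le> M^2 / 4
           + (real (card (Om j)) - 1) / real (card (Om j)) * avg_sens n (Om(j := Om j - {a})) f"
proof -
  define Om' where "Om' = Om(j := Om j - {a})"
  define c where "c = (real (card (Om j)) - 1) / real (card (Om j))"
  have rest: "(\<Sum>i\<in>{..<n}-{j}. influence n Om f i) = c * (\<Sum>i\<in>{..<n}-{j}. influence n Om' f i)"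
    unfolding sum_distrib_left c_def Om'_def
    by (intro sum.cong refl influence_restrict_canalizing[OF fin ne j a kj canal]) auto
  have "0 \<le> c" unfolding c_def using kj by simp
  hence "0 \<le> c * influence n Om' f j" using influence_nonneg by (rule mult_nonneg_nonneg)
  moreover have "influence n Om f j \<le> M^2/4" by (rule influence_le[OF fin ne range j])
  ultimately have "avg_sens n Om f \<le> M^2/4 + c * avg_sens n Om' f"
    unfolding avg_sens_def using j rest by (simp add: sum.remove distrib_left)
  thus ?thesis unfolding c_def Om'_def .
qed

end
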